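(* Let $(M,F)$ be a conic pseudo-Finsler surface and $\overline F=e^\phi F$ an anisotropic conformal change. Then $$\phi_{;2}P+P_{;2}+\varepsilon\phi_{;2}Q_{;2}-(\mathcal I\phi_{;2}+1)Q-F^2\phi_{,2}=0.$$
   Context: Throughout, $M$ is a smooth $2$-dimensional manifold, $TM_0$ its slit tangent bundle with induced local coordinates $(x^i,y^i)$, $\partial_i=\partial/\partial x^i$, $\dot\partial_i=\partial/\partial y^i$. A function is called $h(r)$ if it is positively homogeneous of degree $r$ in $y$. A conic pseudo-Finsler surface $(M,F)$ consists of a conic subbundle $\mathcal A\subset TM_0$ (an open set invariant under $y\mapsto\lambda y$, $\lambda>0$, projecting onto $M$) and a smooth $h(1)$ function $F:\mathcal A\to\mathbb R$ such that $g_{ij}=\frac12\dot\partial_i\dot\partial_jF^2$ is nondegenerate. Put $\ell_i=\dot\partial_iF$, $\ell^i=y^i/F$. Modified Berwald frame: $\varepsilon\in\{1,-1\}$ and a covector $m_i$ satisfy $g_{ij}=\ell_i\ell_j+\varepsilon m_im_j$, $m^i=g^{ij}m_j$, so $\ell^i\ell_i=1$, $\ell^im_i=0$, $m^im_i=\varepsilon$. The main scalar $\mathcal I$ ($h(0)$) is defined by $FC_{ijk}=\mathcal I\,m_im_jm_k$, where $C_{ijk}=\frac14\dot\partial_i\dot\partial_j\dot\partial_kF^2$. The geodesic spray of $F$ is $S=y^i\partial_i-2G^i\dot\partial_i$; $G^i_j=\dot\partial_jG^i$, $\delta_i=\partial_i-G^j_i\dot\partial_j$. For a smooth function $f$: $f_{;1}=y^i\dot\partial_if$,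 $f_{;2}=\varepsilon Fm^i\dot\partial_if$, $f_{,1}=\ell^i\delta_if$, $f_{,2}=\varepsilon m^i\delta_if$; iterated derivatives are read left to right, e.g. $f_{,1;2}=(f_{,1})_{;2}$. Anisotropic conformal change: $\phi$ is a smooth $h(0)$ function on $\mathcal A$ with $F^2(\dot\partial_i\dot\partial_j\phi+\dot\partial_i\phi\,\dot\partial_j\phi)m^im^j+\varepsilon\ne0$, and $\overline F=e^{\phi}F$. Set $\sigma=\phi_{;2;2}+\varepsilon\mathcal I\phi_{;2}+2(\phi_{;2})^2$, $\rho=1/(\sigma+\varepsilon-(\phi_{;2})^2)$, $2Q=\varepsilon\rho F^2(\phi_{;2}\phi_{,1}+\phi_{,1;2}-2\phi_{,2})$, $2P=-\rho F^2\phi_{;2}(\phi_{;2}\phi_{,1}+\phi_{,1;2}-2\phi_{,2})+F^2\phi_{,1}$. *)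

theory Defs
  imports "HOL-Analysis.Analysis"
begin

text \<open>A point of the tangent bundle over a chart of the
surface is a pair (x,y) with x, y in R^2 (induced coordinates (x^i,y^i)).\<close>

type_synonym pt = "(real^2) \<times> (real^2)"
type_synonym fn = "pt \<Rightarrow> real"

definition dderiv :: "pt \<Rightarrow> fn \<Rightarrow> fn" where
  "dderiv v f p = deriv (\<lambda>t. f (p + t *\<^sub>R v)) 0"

definition px :: "2 \<Rightarrow> fn \<Rightarrow> fn" where
  "px i f = dderiv (axis i 1, 0) f"

definition py :: "2 \<Rightarrow> fn \<Rightarrow> fn" where
  "py i f = dderiv (0, axis i 1) f"

fun dd :: "pt list \<Rightarrow> fn \<Rightarrow> fn" where
  "dd [] f = f"
| "dd (v # vs) f = dderiv v (dd vs f)"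

definition smooth_on :: "pt set \<Rightarrow> fn \<Rightarrow> bool" where
  "smooth_on A f \<longleftrightarrow> (\<forall>vs. dd vs f differentiable_on A)"

definition conic :: "pt set \<Rightarrow> bool" where
  "conic A \<longleftrightarrow> open A \<and> A \<subseteq> {p. snd p \<noteq> 0} \<and>
     (\<forall>p\<in>A. \<forall>c::real. c > 0 \<longrightarrow> (fst p, c *\<^sub>R snd p) \<in> A)"

definition homog :: "pt set \<Rightarrow> real \<Rightarrow> fn \<Rightarrow> bool" where
  "homog A r f \<longleftrightarrow> (\<forall>p\<in>A. \<forall>c::real. c > 0 \<longrightarrow>
      f (fst p, c *\<^sub>R snd p) = c powr r * f p)"

definition sqF :: "fn \<Rightarrow> fn" where
  "sqF F = (\<lambda>q. (F q)\<^sup>2)"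

definition gmat :: "fn \<Rightarrow> pt \<Rightarrow> real^2^2" where
  "gmat F p = (\<chi> i j. 1/2 * py i (py j (sqF F)) p)"

definition ginv :: "fn \<Rightarrow> pt \<Rightarrow> real^2^2" where
  "ginv F p = matrix_inv (gmat F p)"

definition Cijk :: "fn \<Rightarrow> 2 \<Rightarrow> 2 \<Rightarrow> 2 \<Rightarrow> fn" where
  "Cijk F i j k p = 1/4 * py i (py j (py k (sqF F))) p"

definition lowl :: "fn \<Rightarrow> 2 \<Rightarrow> fn" where
  "lowl F i = py i F"

definition upl :: "fn \<Rightarrow> 2 \<Rightarrow> fn" where
  "upl F i p = snd p $ i / F p"

definition upm :: "fn \<Rightarrow> (2 \<Rightarrow> fn) \<Rightarrow> 2 \<Rightarrow> fn" where
  "upm F m i p = (\<Sum>j\<in>UNIV. ginv F p $ i $ j * m j p)"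

definition pseudo_finsler :: "pt set \<Rightarrow> fn \<Rightarrow> bool" where
  "pseudo_finsler A F \<longleftrightarrow> conic A \<and> smooth_on A F \<and> homog A 1 F \<and>
     (\<forall>p\<in>A. det (gmat F p) \<noteq> 0)"

definition berwald_frame :: "pt set \<Rightarrow> fn \<Rightarrow> real \<Rightarrow> (2 \<Rightarrow> fn) \<Rightarrow> bool" where
  "berwald_frame A F eps m \<longleftrightarrow> eps \<in> {1, -1} \<and> (\<forall>i. smooth_on A (m i)) \<and>
     (\<forall>p\<in>A. \<forall>i j. gmat F p $ i $ j = lowl F i p * lowl F j p + eps * m i p * m j p)"

definition main_scalar :: "pt set \<Rightarrow> fn \<Rightarrow> (2 \<Rightarrow> fn) \<Rightarrow> fn \<Rightarrow> bool" where
  "main_scalar A F m I \<longleftrightarrow>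
     (\<forall>p\<in>A. \<forall>i j k. F p * Cijk F i j k p = I p * m i p * m j p * m k p)"

text \<open>geodesic spray coefficients: S = y^i d_i - 2 G^i dot-d_i,
  G^i = 1/4 g^{il} (y^k d_k dot-d_l F^2 - d_l F^2)\<close>
definition Gsp :: "fn \<Rightarrow> 2 \<Rightarrow> fn" where
  "Gsp F i p = 1/4 * (\<Sum>l\<in>UNIV. ginv F p $ i $ l *
      ((\<Sum>k\<in>UNIV. snd p $ k * px k (py l (sqF F)) p) - px l (sqF F) p))"

definition Gij :: "fn \<Rightarrow> 2 \<Rightarrow> 2 \<Rightarrow> fn" where
  "Gij F i j = py j (Gsp F i)"

definition hdelta :: "fn \<Rightarrow> 2 \<Rightarrow> fn \<Rightarrow> fn" where
  "hdelta F i f p = px i f p - (\<Sum>j\<in>UNIV. Gij F j i p * py j f p)"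

text \<open>f_{;1}, f_{;2}, f_{,1}, f_{,2}\<close>
definition sc1 :: "fn \<Rightarrow> fn" where
  "sc1 f p = (\<Sum>i\<in>UNIV. snd p $ i * py i f p)"

definition sc2 :: "fn \<Rightarrow> real \<Rightarrow> (2 \<Rightarrow> fn) \<Rightarrow> fn \<Rightarrow> fn" where
  "sc2 F eps m f p = eps * F p * (\<Sum>i\<in>UNIV. upm F m i p * py i f p)"

definition cm1 :: "fn \<Rightarrow> fn \<Rightarrow> fn" where
  "cm1 F f p = (\<Sum>i\<in>UNIV. upl F i p * hdelta F i f p)"

definition cm2 :: "fn \<Rightarrow> real \<Rightarrow> (2 \<Rightarrow> fn) \<Rightarrow> fn \<Rightarrow> fn" where
  "cm2 F eps m f p = eps * (\<Sum>i\<in>UNIV. upm F m i p * hdelta F i f p)"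

definition aniso_conformal :: "pt set \<Rightarrow> fn \<Rightarrow> real \<Rightarrow> (2 \<Rightarrow> fn) \<Rightarrow> fn \<Rightarrow> bool" where
  "aniso_conformal A F eps m \<phi> \<longleftrightarrow> smooth_on A \<phi> \<and> homog A 0 \<phi> \<and>
     (\<forall>p\<in>A. (F p)\<^sup>2 * (\<Sum>i\<in>UNIV. \<Sum>j\<in>UNIV.
         (py i (py j \<phi>) p + py i \<phi> p * py j \<phi> p) * upm F m i p * upm F m j p) + eps \<noteq> 0)"

definition sigma_fn :: "fn \<Rightarrow> real \<Rightarrow> (2 \<Rightarrow> fn) \<Rightarrow> fn \<Rightarrow> fn \<Rightarrow> fn" where
  "sigma_fn F eps m I \<phi> p =
     sc2 F eps m (sc2 F eps m \<phi>) p + eps * I p * sc2 F eps m \<phi> p + 2 * (sc2 F eps m \<phi> p)\<^sup>2"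

definition rho_fn :: "fn \<Rightarrow> real \<Rightarrow> (2 \<Rightarrow> fn) \<Rightarrow> fn \<Rightarrow> fn \<Rightarrow> fn" where
  "rho_fn F eps m I \<phi> p = 1 / (sigma_fn F eps m I \<phi> p + eps - (sc2 F eps m \<phi> p)\<^sup>2)"

definition Kfac :: "fn \<Rightarrow> real \<Rightarrow> (2 \<Rightarrow> fn) \<Rightarrow> fn \<Rightarrow> fn" where
  "Kfac F eps m \<phi> p = sc2 F eps m \<phi> p * cm1 F \<phi> p + sc2 F eps m (cm1 F \<phi>) p
      - 2 * cm2 F eps m \<phi> p"

definition Q_fn :: "fn \<Rightarrow> real \<Rightarrow> (2 \<Rightarrow> fn) \<Rightarrow> fn \<Rightarrow> fn \<Rightarrow> fn" where
  "Q_fn F eps m I \<phi> p = eps * rho_fn F eps m I \<phi> p * (F p)\<^sup>2 * Kfac F eps m \<phi> p / 2"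

definition P_fn :: "fn \<Rightarrow> real \<Rightarrow> (2 \<Rightarrow> fn) \<Rightarrow> fn \<Rightarrow> fn \<Rightarrow> fn" where
  "P_fn F eps m I \<phi> p = (- rho_fn F eps m I \<phi> p * (F p)\<^sup>2 * sc2 F eps m \<phi> p * Kfac F eps m \<phi> p
      + (F p)\<^sup>2 * cm1 F \<phi> p) / 2"

end

theory Submission
  imports Defs
begin

text \<open>Put K = \<phi>_{;2} \<phi>_{,1} + \<phi>_{,1;2} - 2 \<phi>_{,2}, so that P = -\<epsilon> \<phi>_{;2} Q + F^2 \<phi>_{,1}/2.
  The Leibniz rule for (-)_{;2} together with l_i m^i = 0 turns the left-hand side into
  F^2 K/2 - \<epsilon> Q (\<sigma> + \<epsilon> - \<phi>_{;2}^2), which vanishes because 2Q = \<epsilon> \<rho> F^2 K, provided the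
  denominator of \<rho> is nonzero; this also makes \<rho>, hence Q and P, smooth, so that the Leibniz
  rule applies.

  The geometric input is the identity \<sigma> + \<epsilon> - \<phi>_{;2}^2 = F^2 (\<phi>_ij + \<phi>_i \<phi>_j) m^i m^j + \<epsilon>,
  whose right-hand side is nonzero by hypothesis. It rests on (m^j)_{;2} = -l^j - \<epsilon> I m^j,
  obtained by differentiating l_i m^i = 0 and g_ij m^i m^j = \<epsilon> and using F C_ijk = I m_i m_j m_k,
  and on Euler's relation y^i \<phi>_i = 0 for the h(0) function \<phi>.\<close>

lemma has_real_derivative_along_line:
  assumes "(f has_derivative f') (at q)"
  shows "((\<lambda>t. f (q + t *\<^sub>R v)) has_real_derivative f' v) (at 0)"
proof -
  have line: "((\<lambda>t::real. q + t *\<^sub>R v) has_derivative (\<lambda>t. t *\<^sub>R v)) (at 0)"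
    by (auto intro!: derivative_eq_intros)
  have "((\<lambda>t. f (q + t *\<^sub>R v)) has_derivative (\<lambda>t. f' (t *\<^sub>R v))) (at 0)"
    using diff_chain_at[OF line] assms by (simp add: o_def)
  moreover have "(\<lambda>t. f' (t *\<^sub>R v)) = (\<lambda>t. f' v * t)"
    using linear_scale[OF has_derivative_linear[OF assms]] by (auto simp: mult.commute)
  ultimately show ?thesis by (simp add: has_field_derivative_def)
qed

lemma dderiv_eq_has_derivative:
  assumes "(f has_derivative f') (at q)"
  shows "dderiv v f q = f' v"
  unfolding dderiv_def using has_real_derivative_along_line[OF assms] by (rule DERIV_imp_deriv)

lemma has_real_derivative_dderiv:
  assumes "f differentiable (at q)"
  shows "((\<lambda>t. f (q + t *\<^sub>R v)) has_real_derivative dderiv v f q) (at 0)"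
  using assms has_real_derivative_along_line dderiv_eq_has_derivative
  unfolding differentiable_def by metis

lemma dderiv_const [simp]: "dderiv v (\<lambda>x. c) q = 0"
  unfolding dderiv_def by simp

lemma dderiv_add:
  "f differentiable (at q) \<Longrightarrow> g differentiable (at q) \<Longrightarrow>
   dderiv v (\<lambda>x. f x + g x) q = dderiv v f q + dderiv v g q"
  unfolding dderiv_def[of v "\<lambda>x. f x + g x"]
  by (intro DERIV_imp_deriv) (auto intro!: derivative_eq_intros has_real_derivative_dderiv)

lemma dderiv_diff:
  "f differentiable (at q) \<Longrightarrow> g differentiable (at q) \<Longrightarrow>
   dderiv v (\<lambda>x. f x - g x) q = dderiv v f q - dderiv v g q"
  unfolding dderiv_def[of v "\<lambda>x. f x - g x"]
  by (intro DERIV_imp_deriv) (auto intro!: derivative_eq_intros has_real_derivative_dderiv)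

lemma dderiv_mult:
  "f differentiable (at q) \<Longrightarrow> g differentiable (at q) \<Longrightarrow>
   dderiv v (\<lambda>x. f x * g x) q = f q * dderiv v g q + g q * dderiv v f q"
  unfolding dderiv_def[of v "\<lambda>x. f x * g x"]
  by (intro DERIV_imp_deriv)
     (auto intro!: derivative_eq_intros has_real_derivative_dderiv simp: algebra_simps)

lemma dderiv_inverse:
  "f differentiable (at q) \<Longrightarrow> f q \<noteq> 0 \<Longrightarrow>
   dderiv v (\<lambda>x. inverse (f x)) q = - dderiv v f q * (inverse (f q) * inverse (f q))"
  unfolding dderiv_def[of v "\<lambda>x. inverse (f x)"]
  by (intro DERIV_imp_deriv)
     (auto intro!: derivative_eq_intros has_real_derivative_dderiv simp: power2_eq_square)

lemma dderiv_snd_nth: "dderiv v (\<lambda>x. snd x $ k) q = snd v $ k"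
  unfolding dderiv_def
  by (intro DERIV_imp_deriv) (auto intro!: derivative_eq_intros)

lemma dderiv_cong_open:
  assumes "open A" "q \<in> A" "\<And>x. x \<in> A \<Longrightarrow> f x = g x"
  shows "dderiv v f q = dderiv v g q"
proof -
  have "isCont (\<lambda>t::real. q + t *\<^sub>R v) 0" by (intro continuous_intros)
  then have "((\<lambda>t::real. q + t *\<^sub>R v) \<longlongrightarrow> q) (nhds 0)"
    using tendsto_at_iff_tendsto_nhds[of "\<lambda>t::real. q + t *\<^sub>R v" 0]
    unfolding isCont_def by simp
  then have "eventually (\<lambda>t. q + t *\<^sub>R v \<in> A) (nhds 0)"
    using assms(1,2) by (rule topological_tendstoD)
  then have "eventually (\<lambda>t. f (q + t *\<^sub>R v) = g (q + t *\<^sub>R v)) (nhds 0)"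
    by (rule eventually_mono) (use assms(3) in blast)
  then show ?thesis unfolding dderiv_def by (rule deriv_cong_ev) simp
qed

text \<open>Smoothness up to the values off \<open>A\<close>: \<open>dderiv\<close> differentiates in the whole space,
  so iterated derivatives are only meaningful on \<open>A\<close>, and each directional derivative is merely
  required to agree on \<open>A\<close> with another such function. Unlike \<open>smooth_on\<close>, this notion is
  preserved by the algebraic operations and by changes off \<open>A\<close>.\<close>

coinductive smooth_rel :: "pt set \<Rightarrow> fn \<Rightarrow> bool" for A where
  "f differentiable_on A \<Longrightarrow> (\<forall>v. \<exists>g. smooth_rel A g \<and> (\<forall>q\<in>A. dderiv v f q = g q))
   \<Longrightarrow> smooth_rel A f"

lemma smooth_rel_dderiv_witness:
  "smooth_rel A f \<Longrightarrow> \<exists>g. smooth_rel A g \<and> (\<forall>q\<in>A. dderiv v f q = g q)"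
  by (erule smooth_rel.cases) blast

lemma smooth_rel_differentiable_at:
  "open A \<Longrightarrow> smooth_rel A f \<Longrightarrow> q \<in> A \<Longrightarrow> f differentiable (at q)"
  by (erule smooth_rel.cases) (simp add: differentiable_on_eq_differentiable_at)

lemma smooth_rel_cong:
  assumes A: "open A" and "smooth_rel A f" and "\<And>x. x \<in> A \<Longrightarrow> f x = g x"
  shows "smooth_rel A g"
proof -
  have "\<exists>f. smooth_rel A f \<and> (\<forall>x\<in>A. f x = g x)" using assms by blast
  then show ?thesis
  proof (coinduction arbitrary: g rule: smooth_rel.coinduct)
    case (smooth_rel g)
    then obtain f where f: "smooth_rel A f" "\<forall>x\<in>A. f x = g x" by blast
    have "g differentiable at x" if x: "x \<in> A" for x
    proof -
      obtain f' where "(f has_derivative f') (at x)"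
        using smooth_rel_differentiable_at[OF A f(1) x] unfolding differentiable_def by blast
      then have "(g has_derivative f') (at x)"
        by (rule has_derivative_transform_within_open[OF _ A x]) (use f(2) in auto)
      then show ?thesis unfolding differentiable_def by blast
    qed
    then have "g differentiable_on A"
      by (simp add: differentiable_on_eq_differentiable_at[OF A])
    moreover have "\<exists>h. smooth_rel A h \<and> (\<forall>q\<in>A. dderiv v g q = h q)" for v
    proof -
      obtain h where h: "smooth_rel A h" "\<forall>q\<in>A. dderiv v f q = h q"
        using smooth_rel_dderiv_witness[OF f(1)] by blast
      have "\<forall>q\<in>A. dderiv v g q = h q"
        using h(2) f(2) dderiv_cong_open[OF A, of _ f g v] by auto
      with h(1) show ?thesis by blast
    qed
    ultimately show ?case by blast
  qed
qed

lemma smooth_rel_dderiv [simp]: "open A \<Longrightarrow> smooth_rel A f \<Longrightarrow> smooth_rel A (dderiv v f)"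
  by (metis smooth_rel_cong smooth_rel_dderiv_witness)

lemma smooth_on_imp_smooth_rel:
  assumes "smooth_on A f"
  shows "smooth_rel A f"
proof -
  have "smooth_rel A (dd vs f)" for vs
  proof (coinduction arbitrary: vs rule: smooth_rel.coinduct)
    case smooth_rel
    show ?case using assms unfolding smooth_on_def by (metis dd.simps(2))
  qed
  from this[of "[]"] show ?thesis by simp
qed

text \<open>Closed under directional derivatives on \<open>A\<close>, hence contained in \<open>smooth_rel\<close> by
  coinduction; this yields the closure properties of \<open>smooth_rel\<close>.\<close>

inductive smooth_expr :: "pt set \<Rightarrow> fn \<Rightarrow> bool" for A where
  base: "smooth_rel A f \<Longrightarrow> smooth_expr A f"
| const: "smooth_expr A (\<lambda>x. c)"
| add: "smooth_expr A f \<Longrightarrow> smooth_expr A g \<Longrightarrow> smooth_expr A (\<lambda>x. f x + g x)"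
| mult: "smooth_expr A f \<Longrightarrow> smooth_expr A g \<Longrightarrow> smooth_expr A (\<lambda>x. f x * g x)"
| inverse: "smooth_rel A f \<Longrightarrow> \<forall>x\<in>A. f x \<noteq> 0 \<Longrightarrow> smooth_expr A (\<lambda>x. inverse (f x))"

lemma smooth_expr_differentiable_at:
  assumes A: "open A"
  shows "smooth_expr A f \<Longrightarrow> q \<in> A \<Longrightarrow> f differentiable (at q)"
  by (induction rule: smooth_expr.induct) (auto simp: smooth_rel_differentiable_at[OF A])

lemma smooth_expr_dderiv:
  assumes A: "open A"
  shows "smooth_expr A f \<Longrightarrow> \<exists>g. smooth_expr A g \<and> (\<forall>q\<in>A. dderiv v f q = g q)"
proof (induction rule: smooth_expr.induct)
  case (base f)
  then show ?case using smooth_rel_dderiv_witness smooth_expr.base by blast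
next
  case (const c)
  show ?case using smooth_expr.const[of A 0] by auto
next
  case (add f g)
  then obtain f' g' where f': "smooth_expr A f'" "\<forall>q\<in>A. dderiv v f q = f' q"
    and g': "smooth_expr A g'" "\<forall>q\<in>A. dderiv v g q = g' q"
    by blast
  have "\<forall>q\<in>A. dderiv v (\<lambda>x. f x + g x) q = f' q + g' q"
  proof
    fix q assume q: "q \<in> A"
    show "dderiv v (\<lambda>x. f x + g x) q = f' q + g' q"
      using dderiv_add[OF smooth_expr_differentiable_at[OF A add.hyps(1) q]
          smooth_expr_differentiable_at[OF A add.hyps(2) q]] f'(2) g'(2) q
      by simp
  qed
  then show ?case using smooth_expr.add[OF f'(1) g'(1)] by blast
next
  case (mult f g)
  then obtain f' g' where f': "smooth_expr A f'" "\<forall>q\<in>A. dderiv v f q = f' q"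
    and g': "smooth_expr A g'" "\<forall>q\<in>A. dderiv v g q = g' q"
    by blast
  have "\<forall>q\<in>A. dderiv v (\<lambda>x. f x * g x) q = f q * g' q + g q * f' q"
  proof
    fix q assume q: "q \<in> A"
    show "dderiv v (\<lambda>x. f x * g x) q = f q * g' q + g q * f' q"
      using dderiv_mult[OF smooth_expr_differentiable_at[OF A mult.hyps(1) q]
          smooth_expr_differentiable_at[OF A mult.hyps(2) q]] f'(2) g'(2) q
      by simp
  qed
  then show ?case
    using smooth_expr.add[OF smooth_expr.mult[OF mult.hyps(1) g'(1)]
        smooth_expr.mult[OF mult.hyps(2) f'(1)]]
    by blast
next
  case (inverse f)
  obtain f' where f': "smooth_rel A f'" "\<forall>q\<in>A. dderiv v f q = f' q"
    using smooth_rel_dderiv_witness[OF inverse(1)] by blast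
  have "smooth_expr A (\<lambda>x. (-1) * (f' x * (inverse (f x) * inverse (f x))))"
    using inverse f'(1)
    by (intro smooth_expr.mult smooth_expr.const smooth_expr.base smooth_expr.inverse)
  moreover have
    "\<forall>q\<in>A. dderiv v (\<lambda>x. inverse (f x)) q = (-1) * (f' q * (inverse (f q) * inverse (f q)))"
    using inverse f'(2) by (simp add: dderiv_inverse smooth_rel_differentiable_at[OF A])
  ultimately show ?case by blast
qed

lemma smooth_expr_imp_smooth_rel:
  assumes A: "open A"
  shows "smooth_expr A f \<Longrightarrow> smooth_rel A f"
proof (coinduction arbitrary: f rule: smooth_rel.coinduct)
  case (smooth_rel f)
  have "f differentiable_on A"
    using smooth_expr_differentiable_at[OF A smooth_rel]
    by (simp add: differentiable_on_eq_differentiable_at[OF A])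
  moreover have "\<exists>g. (smooth_expr A g \<or> smooth_rel A g) \<and> (\<forall>q\<in>A. dderiv v f q = g q)" for v
    using smooth_expr_dderiv[OF A smooth_rel] by blast
  ultimately show ?case by blast
qed

context
  fixes A :: "pt set"
  assumes A: "open A"
begin

lemma smooth_rel_const [simp]: "smooth_rel A (\<lambda>x. c)"
  using smooth_expr_imp_smooth_rel[OF A smooth_expr.const] .

lemma smooth_rel_add [simp]: "smooth_rel A f \<Longrightarrow> smooth_rel A g \<Longrightarrow> smooth_rel A (\<lambda>x. f x + g x)"
  by (rule smooth_expr_imp_smooth_rel[OF A]) (intro smooth_expr.add smooth_expr.base)

lemma smooth_rel_mult [simp]: "smooth_rel A f \<Longrightarrow> smooth_rel A g \<Longrightarrow> smooth_rel A (\<lambda>x. f x * g x)"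
  by (rule smooth_expr_imp_smooth_rel[OF A]) (intro smooth_expr.mult smooth_expr.base)

lemma smooth_rel_inverse: "smooth_rel A f \<Longrightarrow> \<forall>x\<in>A. f x \<noteq> 0 \<Longrightarrow> smooth_rel A (\<lambda>x. inverse (f x))"
  by (rule smooth_expr_imp_smooth_rel[OF A]) (rule smooth_expr.inverse)

lemma smooth_rel_minus [simp]: "smooth_rel A f \<Longrightarrow> smooth_rel A (\<lambda>x. - f x)"
  using smooth_rel_mult[of "\<lambda>x. -1" f] by simp

lemma smooth_rel_diff [simp]: "smooth_rel A f \<Longrightarrow> smooth_rel A g \<Longrightarrow> smooth_rel A (\<lambda>x. f x - g x)"
  using smooth_rel_add[of f "\<lambda>x. - g x"] by simp

lemma smooth_rel_divide:
  "smooth_rel A f \<Longrightarrow> smooth_rel A g \<Longrightarrow> \<forall>x\<in>A. g x \<noteq> 0 \<Longrightarrow> smooth_rel A (\<lambda>x. f x / g x)"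
  using smooth_rel_mult[of f "\<lambda>x. inverse (g x)"] smooth_rel_inverse[of g]
  by (simp add: divide_inverse)

lemma smooth_rel_divide_const [simp]: "smooth_rel A f \<Longrightarrow> smooth_rel A (\<lambda>x. f x / c)"
  using smooth_rel_mult[of f "\<lambda>x. inverse c"] by (simp add: divide_inverse)

lemma smooth_rel_power2 [simp]: "smooth_rel A f \<Longrightarrow> smooth_rel A (\<lambda>x. (f x)\<^sup>2)"
  using smooth_rel_mult[of f f] by (simp add: power2_eq_square)

lemma smooth_rel_sum [simp]:
  "(\<And>i. i \<in> S \<Longrightarrow> smooth_rel A (f i)) \<Longrightarrow> smooth_rel A (\<lambda>x. \<Sum>i\<in>S. f i x)"
  by (induction S rule: infinite_finite_induct) auto

lemma smooth_rel_py [simp]: "smooth_rel A f \<Longrightarrow> smooth_rel A (py i f)"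
  unfolding py_def by (simp add: A)

lemma smooth_rel_px [simp]: "smooth_rel A f \<Longrightarrow> smooth_rel A (px i f)"
  unfolding px_def by (simp add: A)

lemma smooth_rel_snd_nth [simp]: "smooth_rel A (\<lambda>x. snd x $ k)"
proof (rule smooth_rel.intros)
  show "(\<lambda>x. snd x $ k) differentiable_on A"
    by (intro bounded_linear_imp_differentiable_on bounded_linear_compose[OF bounded_linear_vec_nth]
        bounded_linear_snd)
  show "\<forall>v. \<exists>g. smooth_rel A g \<and> (\<forall>q\<in>A. dderiv v (\<lambda>x. snd x $ k) q = g q)"
  proof
    fix v :: pt
    show "\<exists>g. smooth_rel A g \<and> (\<forall>q\<in>A. dderiv v (\<lambda>x. snd x $ k) q = g q)"
      by (intro exI[of _ "\<lambda>x. snd v $ k"]) (simp add: dderiv_snd_nth)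
  qed
qed

end

lemma dderiv_fiber_eq_sum_py:
  assumes "f differentiable (at q)"
  shows "dderiv (0, y) f q = (\<Sum>i\<in>UNIV. y $ i * py i f q)"
proof -
  obtain f' where f': "(f has_derivative f') (at q)"
    using assms unfolding differentiable_def by blast
  have lin: "linear f'" using has_derivative_linear[OF f'] .
  have "(0, y) = (\<Sum>i\<in>UNIV. y $ i *\<^sub>R (0::real^2, axis i (1::real)))"
    by (auto simp: vec_eq_iff forall_2 sum_2 axis_def)
  then have "f' (0, y) = (\<Sum>i\<in>UNIV. f' (y $ i *\<^sub>R (0, axis i 1)))"
    by (metis linear_sum[OF lin])
  also have "\<dots> = (\<Sum>i\<in>UNIV. y $ i * f' (0, axis i 1))"
    by (rule sum.cong[OF refl]) (simp only: linear_scale[OF lin] real_scaleR_def)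
  finally show ?thesis
    unfolding py_def dderiv_eq_has_derivative[OF f'] .
qed

lemma euler_homog:
  assumes "open A" "homog A r f" "f differentiable (at q)" "q \<in> A"
  shows "sc1 f q = r * f q"
proof -
  have "eventually (\<lambda>t::real. t \<in> ball 0 1) (nhds 0)"
    by (intro eventually_nhds_in_open) auto
  then have "eventually (\<lambda>t. f (q + t *\<^sub>R (0, snd q)) = (1 + t) powr r * f q) (nhds 0)"
  proof (rule eventually_mono)
    fix t :: real
    assume "t \<in> ball 0 1"
    then have "1 + t > 0" by (auto simp: dist_real_def)
    moreover have "q + t *\<^sub>R (0, snd q) = (fst q, (1 + t) *\<^sub>R snd q)"
      by (cases q) (auto simp: algebra_simps)
    ultimately show "f (q + t *\<^sub>R (0, snd q)) = (1 + t) powr r * f q"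
      using assms(2,4) unfolding homog_def by auto
  qed
  then have "dderiv (0, snd q) f q = deriv (\<lambda>t. (1 + t) powr r * f q) 0"
    unfolding dderiv_def by (rule deriv_cong_ev) simp
  also have "\<dots> = r * f q"
    by (rule DERIV_imp_deriv) (auto intro!: derivative_eq_intros)
  finally show ?thesis
    using dderiv_fiber_eq_sum_py[OF assms(3)] by (simp add: sc1_def)
qed

lemma py_const [simp]: "py i (\<lambda>x. c) q = 0"
  unfolding py_def by simp

lemma py_snd_nth [simp]: "py i (\<lambda>x. snd x $ k) q = (if k = i then 1 else 0)"
  unfolding py_def dderiv_snd_nth by (simp add: axis_def)

context
  fixes A :: "pt set"
  assumes A: "open A"
begin

lemma py_add [simp]:
  "smooth_rel A f \<Longrightarrow> smooth_rel A g \<Longrightarrow> q \<in> A \<Longrightarrow> py i (\<lambda>x. f x + g x) q = py i f q + py i g q"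
  unfolding py_def by (simp add: dderiv_add smooth_rel_differentiable_at[OF A])

lemma py_diff [simp]:
  "smooth_rel A f \<Longrightarrow> smooth_rel A g \<Longrightarrow> q \<in> A \<Longrightarrow> py i (\<lambda>x. f x - g x) q = py i f q - py i g q"
  unfolding py_def by (simp add: dderiv_diff smooth_rel_differentiable_at[OF A])

lemma py_mult [simp]:
  "smooth_rel A f \<Longrightarrow> smooth_rel A g \<Longrightarrow> q \<in> A \<Longrightarrow>
   py i (\<lambda>x. f x * g x) q = f q * py i g q + g q * py i f q"
  unfolding py_def by (simp add: dderiv_mult smooth_rel_differentiable_at[OF A])

lemma py_divide_const [simp]: "smooth_rel A f \<Longrightarrow> q \<in> A \<Longrightarrow> py i (\<lambda>x. f x / c) q = py i f q / c"
  using py_mult[of f "\<lambda>x. inverse c"] by (simp add: divide_inverse A)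

lemma py_power2 [simp]: "smooth_rel A f \<Longrightarrow> q \<in> A \<Longrightarrow> py i (\<lambda>x. (f x)\<^sup>2) q = 2 * f q * py i f q"
  using py_mult[of f f] by (simp add: power2_eq_square)

lemma py_cong_open: "q \<in> A \<Longrightarrow> (\<And>x. x \<in> A \<Longrightarrow> f x = g x) \<Longrightarrow> py i f q = py i g q"
  unfolding py_def using dderiv_cong_open[OF A] by blast

end

lemma matrix_right_inverse_2_cofactors:
  fixes M N :: "real^2^2"
  assumes "M ** N = mat 1"
  shows "det M * N$1$1 = M$2$2" "det M * N$1$2 = - M$1$2"
    and "det M * N$2$1 = - M$2$1" "det M * N$2$2 = M$1$1"
proof -
  have e: "(M ** N) $ i $ j = mat 1 $ i $ j" for i j using assms by simp
  have "M$1$1 * N$1$1 + M$1$2 * N$2$1 = 1" "M$1$1 * N$1$2 + M$1$2 * N$2$2 = 0"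
    "M$2$1 * N$1$1 + M$2$2 * N$2$1 = 0" "M$2$1 * N$1$2 + M$2$2 * N$2$2 = 1"
    using e[of 1 1] e[of 1 2] e[of 2 1] e[of 2 2]
    by (simp_all add: matrix_matrix_mult_def sum_2 mat_def)
  then show "det M * N$1$1 = M$2$2" "det M * N$1$2 = - M$1$2"
    and "det M * N$2$1 = - M$2$1" "det M * N$2$2 = M$1$1"
    unfolding det_2 by algebra+
qed

lemma berwald_frame_dual_2:
  fixes l1 l2 m1 m2 u1 u2 e :: real
  assumes e: "e * e = 1" and \<Delta>: "l1 * m2 - l2 * m1 \<noteq> 0"
    and G1: "(l1 * l1 + e * m1 * m1) * u1 + (l1 * l2 + e * m1 * m2) * u2 = m1"
    and G2: "(l2 * l1 + e * m2 * m1) * u1 + (l2 * l2 + e * m2 * m2) * u2 = m2"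
  shows "l1 * u1 + l2 * u2 = 0" and "m1 * u1 + m2 * u2 = e"
proof -
  have "(l1 * m2 - l2 * m1) * (l1 * u1 + l2 * u2) =
      m2 * ((l1 * l1 + e * m1 * m1) * u1 + (l1 * l2 + e * m1 * m2) * u2)
    - m1 * ((l2 * l1 + e * m2 * m1) * u1 + (l2 * l2 + e * m2 * m2) * u2)"
    by (simp add: algebra_simps)
  then show lu: "l1 * u1 + l2 * u2 = 0" using \<Delta> G1 G2 by simp
  have "m1 * (e * (m1 * u1 + m2 * u2) - 1) =
      (l1 * l1 + e * m1 * m1) * u1 + (l1 * l2 + e * m1 * m2) * u2 - m1 - l1 * (l1 * u1 + l2 * u2)"
    "m2 * (e * (m1 * u1 + m2 * u2) - 1) =
      (l2 * l1 + e * m2 * m1) * u1 + (l2 * l2 + e * m2 * m2) * u2 - m2 - l2 * (l1 * u1 + l2 * u2)"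
    by (simp_all add: algebra_simps)
  then have "m1 * (e * (m1 * u1 + m2 * u2) - 1) = 0" "m2 * (e * (m1 * u1 + m2 * u2) - 1) = 0"
    using G1 G2 lu by simp_all
  moreover have "m1 \<noteq> 0 \<or> m2 \<noteq> 0" using \<Delta> by auto
  ultimately have "e * (m1 * u1 + m2 * u2) = 1" by auto
  then show "m1 * u1 + m2 * u2 = e" using e by algebra
qed

lemma berwald_frame_orth_2:
  fixes l1 l2 m1 m2 y1 y2 e c :: real
  assumes "e \<noteq> 0" "m1 \<noteq> 0 \<or> m2 \<noteq> 0" and ly: "l1 * y1 + l2 * y2 = c"
    and G1: "(l1 * l1 + e * m1 * m1) * y1 + (l1 * l2 + e * m1 * m2) * y2 = l1 * c"
    and G2: "(l2 * l1 + e * m2 * m1) * y1 + (l2 * l2 + e * m2 * m2) * y2 = l2 * c"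
  shows "m1 * y1 + m2 * y2 = 0"
proof -
  have "e * m1 * (m1 * y1 + m2 * y2) =
      (l1 * l1 + e * m1 * m1) * y1 + (l1 * l2 + e * m1 * m2) * y2 - l1 * (l1 * y1 + l2 * y2)"
    "e * m2 * (m1 * y1 + m2 * y2) =
      (l2 * l1 + e * m2 * m1) * y1 + (l2 * l2 + e * m2 * m2) * y2 - l2 * (l1 * y1 + l2 * y2)"
    by (simp_all add: algebra_simps)
  then have "e * m1 * (m1 * y1 + m2 * y2) = 0" "e * m2 * (m1 * y1 + m2 * y2) = 0"
    using ly G1 G2 by simp_all
  then show ?thesis using assms(1,2) by auto
qed

lemma conformal_identity_algebra:
  fixes e F2 I s c c2 P Q sP sQ ss sc :: real
  assumes "e * e = 1"
    and "P = - e * s * Q + F2 * c / 2"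
    and "sP = - e * s * sQ - e * Q * ss + F2 / 2 * sc"
    and "e * Q * (ss + e * I * s + 2 * s\<^sup>2 + e - s\<^sup>2) = F2 * (s * c + sc - 2 * c2) / 2"
  shows "s * P + sP + e * s * sQ - (I * s + 1) * Q - F2 * c2 = 0"
  using assms by algebra

locale anisotropic_conformal_change =
  fixes A :: "pt set" and F :: fn and eps :: real and m :: "2 \<Rightarrow> fn"
    and I :: fn and \<phi> :: fn
  assumes pseudo_finsler: "pseudo_finsler A F"
    and berwald_frame: "berwald_frame A F eps m"
    and main_scalar: "main_scalar A F m I"
    and aniso_conformal: "aniso_conformal A F eps m \<phi>"
begin

text \<open>The covector l_i = lowl F i is written py i F below.\<close>

lemma open_A [simp]: "open A"
  using pseudo_finsler unfolding pseudo_finsler_def conic_def by blast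

lemma smooth_F [simp]: "smooth_rel A F"
  using pseudo_finsler smooth_on_imp_smooth_rel unfolding pseudo_finsler_def by blast

lemma smooth_phi [simp]: "smooth_rel A \<phi>"
  using aniso_conformal smooth_on_imp_smooth_rel unfolding aniso_conformal_def by blast

lemma smooth_m [simp]: "smooth_rel A (m i)"
  using berwald_frame smooth_on_imp_smooth_rel unfolding berwald_frame_def by blast

lemma eps_sq: "eps * eps = 1"
  using berwald_frame unfolding berwald_frame_def by auto

lemma det_gmat_nonzero: "q \<in> A \<Longrightarrow> det (gmat F q) \<noteq> 0"
  using pseudo_finsler unfolding pseudo_finsler_def by blast

lemma gmat_berwald: "q \<in> A \<Longrightarrow> gmat F q $ i $ j = py i F q * py j F q + eps * m i q * m j q"
  using berwald_frame unfolding berwald_frame_def lowl_def by blast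

lemmas py_rules [simp] =
  py_add[OF open_A] py_diff[OF open_A] py_mult[OF open_A] py_divide_const[OF open_A]
  py_power2[OF open_A]

lemma smooth_sqF [simp]: "smooth_rel A (sqF F)"
  unfolding sqF_def by simp

lemma smooth_gmat [simp]: "smooth_rel A (\<lambda>x. gmat F x $ i $ j)"
  unfolding gmat_def by simp

lemma gmat_eq_hessian: "q \<in> A \<Longrightarrow> gmat F q $ j $ k = py j F q * py k F q + F q * py j (py k F) q"
proof -
  assume q: "q \<in> A"
  have "py j (py k (sqF F)) q = py j (\<lambda>x. 2 * F x * py k F x) q"
    by (rule py_cong_open[OF open_A q]) (simp add: sqF_def)
  then show ?thesis using q by (simp add: gmat_def algebra_simps)
qed

lemma hessian_F: "q \<in> A \<Longrightarrow> F q * py i (py j F) q = eps * m i q * m j q"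
  using gmat_eq_hessian[of q i j] gmat_berwald[of q i j] by simp

lemma F_nonzero: "q \<in> A \<Longrightarrow> F q \<noteq> 0"
  using det_gmat_nonzero[of q] gmat_eq_hessian[of q] by (auto simp: det_2)

lemma frame_det_nonzero: "q \<in> A \<Longrightarrow> py 1 F q * m 2 q - py 2 F q * m 1 q \<noteq> 0"
proof
  assume q: "q \<in> A" and "py 1 F q * m 2 q - py 2 F q * m 1 q = 0"
  moreover have "det (gmat F q) = eps * (py 1 F q * m 2 q - py 2 F q * m 1 q)\<^sup>2"
    using gmat_berwald[OF q] by (simp add: det_2 power2_eq_square algebra_simps)
  ultimately show False using det_gmat_nonzero[OF q] by simp
qed

lemma gmat_ginv: "q \<in> A \<Longrightarrow> gmat F q ** ginv F q = mat 1"
  using det_gmat_nonzero[of q] invertible_det_nz[of "gmat F q"]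
  unfolding ginv_def matrix_inv_def invertible_def by (metis (mono_tags, lifting) someI_ex)

lemma smooth_ginv [simp]: "smooth_rel A (\<lambda>x. ginv F x $ i $ j)"
proof -
  have smooth_if_cofactor: "smooth_rel A (\<lambda>x. ginv F x $ i $ j)"
    if c: "smooth_rel A c" and cof: "\<And>x. x \<in> A \<Longrightarrow> det (gmat F x) * ginv F x $ i $ j = c x"
    for i j c
  proof (rule smooth_rel_cong[OF open_A smooth_rel_divide[OF open_A c]])
    show "smooth_rel A (\<lambda>x. det (gmat F x))" by (simp add: det_2)
    show "\<forall>x\<in>A. det (gmat F x) \<noteq> 0" using det_gmat_nonzero by blast
    show "c x / det (gmat F x) = ginv F x $ i $ j" if "x \<in> A" for x
      using cof[OF that] det_gmat_nonzero[OF that] by (simp add: field_simps)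
  qed
  note cof = matrix_right_inverse_2_cofactors[OF gmat_ginv]
  show ?thesis
    using exhaust_2[of i] exhaust_2[of j]
      smooth_if_cofactor[of "\<lambda>x. gmat F x $ 2 $ 2" 1 1]
      smooth_if_cofactor[of "\<lambda>x. - gmat F x $ 1 $ 2" 1 2]
      smooth_if_cofactor[of "\<lambda>x. - gmat F x $ 2 $ 1" 2 1]
      smooth_if_cofactor[of "\<lambda>x. gmat F x $ 1 $ 1" 2 2]
    by (auto simp: cof)
qed

lemma smooth_upm [simp]: "smooth_rel A (upm F m i)"
  unfolding upm_def[abs_def] by simp

lemma gmat_upm: "q \<in> A \<Longrightarrow> gmat F q $ j $ 1 * upm F m 1 q + gmat F q $ j $ 2 * upm F m 2 q = m j q"
proof -
  assume q: "q \<in> A"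
  have "gmat F q $ j $ 1 * upm F m 1 q + gmat F q $ j $ 2 * upm F m 2 q
      = (gmat F q ** ginv F q) $ j $ 1 * m 1 q + (gmat F q ** ginv F q) $ j $ 2 * m 2 q"
    by (simp add: upm_def matrix_matrix_mult_def sum_2 algebra_simps)
  also have "\<dots> = m j q"
    using gmat_ginv[OF q] exhaust_2[of j] by (auto simp: mat_def)
  finally show ?thesis .
qed

lemma berwald_gmat_upm:
  assumes "q \<in> A"
  shows "(py 1 F q * py 1 F q + eps * m 1 q * m 1 q) * upm F m 1 q
       + (py 1 F q * py 2 F q + eps * m 1 q * m 2 q) * upm F m 2 q = m 1 q"
    and "(py 2 F q * py 1 F q + eps * m 2 q * m 1 q) * upm F m 1 q
       + (py 2 F q * py 2 F q + eps * m 2 q * m 2 q) * upm F m 2 q = m 2 q"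
  using gmat_upm[OF assms, of 1] gmat_upm[OF assms, of 2] by (simp_all add: gmat_berwald[OF assms])

lemma lowl_upm: "q \<in> A \<Longrightarrow> py 1 F q * upm F m 1 q + py 2 F q * upm F m 2 q = 0"
  using berwald_frame_dual_2(1)[OF eps_sq frame_det_nonzero berwald_gmat_upm] .

lemma m_upm: "q \<in> A \<Longrightarrow> m 1 q * upm F m 1 q + m 2 q * upm F m 2 q = eps"
  using berwald_frame_dual_2(2)[OF eps_sq frame_det_nonzero berwald_gmat_upm] .

lemma lowl_euler: "q \<in> A \<Longrightarrow> snd q $ 1 * py 1 F q + snd q $ 2 * py 2 F q = F q"
  using euler_homog[OF open_A _ smooth_rel_differentiable_at[OF open_A smooth_F], of 1 q]
    pseudo_finsler
  unfolding pseudo_finsler_def by (simp add: sc1_def sum_2)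

lemma phi_euler: "q \<in> A \<Longrightarrow> snd q $ 1 * py 1 \<phi> q + snd q $ 2 * py 2 \<phi> q = 0"
  using euler_homog[OF open_A _ smooth_rel_differentiable_at[OF open_A smooth_phi], of 0 q]
    aniso_conformal
  unfolding aniso_conformal_def by (simp add: sc1_def sum_2)

lemma hessian_euler: "q \<in> A \<Longrightarrow> snd q $ 1 * py j (py 1 F) q + snd q $ 2 * py j (py 2 F) q = 0"
proof -
  assume q: "q \<in> A"
  have "py j (\<lambda>x. snd x $ 1 * py 1 F x + snd x $ 2 * py 2 F x - F x) q = py j (\<lambda>x. 0) q"
    by (rule py_cong_open[OF open_A q]) (simp add: lowl_euler)
  then show ?thesis using q exhaust_2[of j] by auto
qed

lemma m_euler: "q \<in> A \<Longrightarrow> m 1 q * snd q $ 1 + m 2 q * snd q $ 2 = 0"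
proof (rule berwald_frame_orth_2)
  assume q: "q \<in> A"
  show "eps \<noteq> 0" using eps_sq by auto
  show "m 1 q \<noteq> 0 \<or> m 2 q \<noteq> 0" using frame_det_nonzero[OF q] by auto
  show "py 1 F q * snd q $ 1 + py 2 F q * snd q $ 2 = F q"
    using lowl_euler[OF q] by (simp add: mult.commute)
  have "gmat F q $ j $ 1 * snd q $ 1 + gmat F q $ j $ 2 * snd q $ 2 = py j F q * F q" for j
  proof -
    have "gmat F q $ j $ 1 * snd q $ 1 + gmat F q $ j $ 2 * snd q $ 2
        = py j F q * (snd q $ 1 * py 1 F q + snd q $ 2 * py 2 F q)
        + F q * (snd q $ 1 * py j (py 1 F) q + snd q $ 2 * py j (py 2 F) q)"
      unfolding gmat_eq_hessian[OF q] by (simp add: algebra_simps)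
    then show ?thesis using lowl_euler[OF q] hessian_euler[OF q, of j] by simp
  qed
  then show "(py 1 F q * py 1 F q + eps * m 1 q * m 1 q) * snd q $ 1
      + (py 1 F q * py 2 F q + eps * m 1 q * m 2 q) * snd q $ 2 = py 1 F q * F q"
    and "(py 2 F q * py 1 F q + eps * m 2 q * m 1 q) * snd q $ 1
      + (py 2 F q * py 2 F q + eps * m 2 q * m 2 q) * snd q $ 2 = py 2 F q * F q"
    by (simp_all add: gmat_berwald[OF q])
qed

lemma sc2_eq: "sc2 F eps m f q = eps * F q * (upm F m 1 q * py 1 f q + upm F m 2 q * py 2 f q)"
  by (simp add: sc2_def sum_2)

text \<open>Differentiate l_i m^i = 0 and use F \<partial>_i l_j = \<epsilon> m_i m_j.\<close>

lemma lowl_sc2_upm: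
  "q \<in> A \<Longrightarrow> py 1 F q * sc2 F eps m (upm F m 1) q + py 2 F q * sc2 F eps m (upm F m 2) q = -1"
proof -
  assume q: "q \<in> A"
  have "py i (\<lambda>x. py 1 F x * upm F m 1 x + py 2 F x * upm F m 2 x) q = py i (\<lambda>x. 0) q" for i
    by (rule py_cong_open[OF open_A q]) (simp add: lowl_upm)
  then have d: "py 1 F q * py i (upm F m 1) q + upm F m 1 q * py i (py 1 F) q
      + (py 2 F q * py i (upm F m 2) q + upm F m 2 q * py i (py 2 F) q) = 0" for i
    using q by simp
  show ?thesis
    unfolding sc2_eq
    using d[of 1] d[of 2] m_upm[OF q] hessian_F[OF q, of 1 1] hessian_F[OF q, of 1 2]
      hessian_F[OF q, of 2 1] hessian_F[OF q, of 2 2] eps_sq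
    by algebra
qed

text \<open>Differentiate g_ij m^i m^j = \<epsilon>; the fibre derivative of g is 2C, and F C_ijk = I m_i m_j m_k.\<close>

lemma m_sc2_upm:
  "q \<in> A \<Longrightarrow> m 1 q * sc2 F eps m (upm F m 1) q + m 2 q * sc2 F eps m (upm F m 2) q = - I q"
proof -
  assume q: "q \<in> A"
  let ?E = "\<lambda>x. gmat F x $1$1 * upm F m 1 x * upm F m 1 x
      + gmat F x $1$2 * upm F m 1 x * upm F m 2 x
      + gmat F x $2$1 * upm F m 2 x * upm F m 1 x
      + gmat F x $2$2 * upm F m 2 x * upm F m 2 x"
  have "?E x = eps" if x: "x \<in> A" for x
  proof -
    have "?E x = upm F m 1 x * (gmat F x $1$1 * upm F m 1 x + gmat F x $1$2 * upm F m 2 x)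
        + upm F m 2 x * (gmat F x $2$1 * upm F m 1 x + gmat F x $2$2 * upm F m 2 x)"
      by (simp add: algebra_simps)
    also have "\<dots> = eps"
      using gmat_upm[OF x, of 1] gmat_upm[OF x, of 2] m_upm[OF x] by (simp add: algebra_simps)
    finally show ?thesis .
  qed
  then have "py i ?E q = py i (\<lambda>x. eps) q" for i
    by (intro py_cong_open[OF open_A q]) simp
  moreover have "py i (\<lambda>x. gmat F x $ j $ k) q = 2 * Cijk F i j k q" for i j k
    using q by (simp add: gmat_def Cijk_def)
  ultimately have d: "2 * Cijk F i 1 1 q * upm F m 1 q * upm F m 1 q
      + gmat F q $1$1 * (py i (upm F m 1) q * upm F m 1 q + upm F m 1 q * py i (upm F m 1) q)
    + 2 * Cijk F i 1 2 q * upm F m 1 q * upm F m 2 q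
      + gmat F q $1$2 * (py i (upm F m 1) q * upm F m 2 q + upm F m 1 q * py i (upm F m 2) q)
    + 2 * Cijk F i 2 1 q * upm F m 2 q * upm F m 1 q
      + gmat F q $2$1 * (py i (upm F m 2) q * upm F m 1 q + upm F m 2 q * py i (upm F m 1) q)
    + 2 * Cijk F i 2 2 q * upm F m 2 q * upm F m 2 q
      + gmat F q $2$2 * (py i (upm F m 2) q * upm F m 2 q + upm F m 2 q * py i (upm F m 2) q) = 0" for i
    using q by (simp add: algebra_simps)
  have C: "F q * Cijk F i j k q = I q * m i q * m j q * m k q" for i j k
    using main_scalar q unfolding main_scalar_def by blast
  show ?thesis
    unfolding sc2_eq
    using d[of 1] d[of 2] gmat_berwald[OF q, of 1 1] gmat_berwald[OF q, of 1 2]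
      gmat_berwald[OF q, of 2 1] gmat_berwald[OF q, of 2 2]
      C[of 1 1 1] C[of 1 1 2] C[of 1 2 1] C[of 1 2 2]
      C[of 2 1 1] C[of 2 1 2] C[of 2 2 1] C[of 2 2 2]
      lowl_upm[OF q] m_upm[OF q] eps_sq
    by algebra
qed

text \<open>By the two previous lemmas the vector (m^j)_{;2} equals -l^j - \<epsilon> I m^j, and l^j \<phi>_j = 0
  by Euler's relation; the factor l_1 m_2 - l_2 m_1 \<noteq> 0 encodes that l, m form a basis.\<close>

lemma sc2_upm_dphi:
  "q \<in> A \<Longrightarrow>
   F q * (sc2 F eps m (upm F m 1) q * py 1 \<phi> q + sc2 F eps m (upm F m 2) q * py 2 \<phi> q)
   = - I q * sc2 F eps m \<phi> q"
proof -
  assume q: "q \<in> A"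
  have "(py 1 F q * m 2 q - py 2 F q * m 1 q) * F q *
      (F q * (sc2 F eps m (upm F m 1) q * py 1 \<phi> q + sc2 F eps m (upm F m 2) q * py 2 \<phi> q)
       + I q * sc2 F eps m \<phi> q) = 0"
    unfolding sc2_eq[of \<phi>]
    using lowl_sc2_upm[OF q] m_sc2_upm[OF q] lowl_euler[OF q] m_euler[OF q] phi_euler[OF q]
      lowl_upm[OF q] m_upm[OF q] eps_sq
    by algebra
  then show ?thesis using frame_det_nonzero[OF q] F_nonzero[OF q] by (simp add: add_eq_0_iff)
qed

lemma sc2_sc2_phi:
  "q \<in> A \<Longrightarrow> sc2 F eps m (sc2 F eps m \<phi>) q =
     (F q)\<^sup>2 * (\<Sum>i\<in>UNIV. \<Sum>j\<in>UNIV. py i (py j \<phi>) q * upm F m i q * upm F m j q)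
     - eps * I q * sc2 F eps m \<phi> q"
proof -
  assume q: "q \<in> A"
  have s: "sc2 F eps m \<phi> = (\<lambda>x. eps * F x * (upm F m 1 x * py 1 \<phi> x + upm F m 2 x * py 2 \<phi> x))"
    by (rule ext) (rule sc2_eq)
  have "sc2 F eps m (sc2 F eps m \<phi>) q = eps * F q *
      (upm F m 1 q * py 1 (sc2 F eps m \<phi>) q + upm F m 2 q * py 2 (sc2 F eps m \<phi>) q)"
    by (rule sc2_eq)
  also have "\<dots> = eps * F q *
      (upm F m 1 q * (eps * (F q * (upm F m 1 q * py 1 (py 1 \<phi>) q + py 1 \<phi> q * py 1 (upm F m 1) q
                        + upm F m 2 q * py 1 (py 2 \<phi>) q + py 2 \<phi> q * py 1 (upm F m 2) q)
                        + py 1 F q * (upm F m 1 q * py 1 \<phi> q + upm F m 2 q * py 2 \<phi> q)))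
     + upm F m 2 q * (eps * (F q * (upm F m 1 q * py 2 (py 1 \<phi>) q + py 1 \<phi> q * py 2 (upm F m 1) q
                        + upm F m 2 q * py 2 (py 2 \<phi>) q + py 2 \<phi> q * py 2 (upm F m 2) q)
                        + py 2 F q * (upm F m 1 q * py 1 \<phi> q + upm F m 2 q * py 2 \<phi> q))))"
    unfolding s using q by (simp add: algebra_simps)
  finally show ?thesis
    using sc2_upm_dphi[OF q] lowl_upm[OF q] eps_sq
    unfolding sc2_eq[of "upm F m _"] sc2_eq[of \<phi>]
    by (simp add: sum_2 power2_eq_square) algebra
qed

definition nondeg :: fn where
  "nondeg x = (F x)\<^sup>2 * (\<Sum>i\<in>UNIV. \<Sum>j\<in>UNIV.
     (py i (py j \<phi>) x + py i \<phi> x * py j \<phi> x) * upm F m i x * upm F m j x) + eps"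

lemma nondeg_nonzero: "q \<in> A \<Longrightarrow> nondeg q \<noteq> 0"
  using aniso_conformal unfolding aniso_conformal_def nondeg_def by blast

lemma smooth_nondeg [simp]: "smooth_rel A nondeg"
  unfolding nondeg_def[abs_def] by simp

lemma rho_denominator_eq_nondeg:
  "q \<in> A \<Longrightarrow> sigma_fn F eps m I \<phi> q + eps - (sc2 F eps m \<phi> q)\<^sup>2 = nondeg q"
  unfolding sigma_fn_def nondeg_def sc2_sc2_phi[of q] sc2_eq[of \<phi>]
  using eps_sq by (simp add: sum_2 power2_eq_square) algebra

lemma rho_eq: "q \<in> A \<Longrightarrow> rho_fn F eps m I \<phi> q = 1 / nondeg q"
  unfolding rho_fn_def by (simp add: rho_denominator_eq_nondeg)

lemma smooth_rho [simp]: "smooth_rel A (rho_fn F eps m I \<phi>)"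
  using smooth_rel_cong[OF open_A
      smooth_rel_divide[OF open_A smooth_rel_const[OF open_A] smooth_nondeg]]
    nondeg_nonzero rho_eq
  by auto

lemma smooth_sc2 [simp]: "smooth_rel A f \<Longrightarrow> smooth_rel A (sc2 F eps m f)"
  unfolding sc2_def[abs_def] by simp

lemma smooth_cm1 [simp]: "smooth_rel A f \<Longrightarrow> smooth_rel A (cm1 F f)"
proof -
  have "smooth_rel A (upl F i)" for i
    unfolding upl_def[abs_def] using F_nonzero by (intro smooth_rel_divide) auto
  then show "smooth_rel A f \<Longrightarrow> smooth_rel A (cm1 F f)"
    unfolding cm1_def[abs_def] hdelta_def[abs_def] Gij_def Gsp_def[abs_def] by simp
qed

lemma smooth_cm2 [simp]: "smooth_rel A f \<Longrightarrow> smooth_rel A (cm2 F eps m f)"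
  unfolding cm2_def[abs_def] hdelta_def[abs_def] Gij_def Gsp_def[abs_def] by simp

lemma smooth_Q [simp]: "smooth_rel A (Q_fn F eps m I \<phi>)"
  unfolding Q_fn_def[abs_def] Kfac_def[abs_def] by simp

lemma Q_times_rho_denominator:
  "q \<in> A \<Longrightarrow> eps * Q_fn F eps m I \<phi> q * (sigma_fn F eps m I \<phi> q + eps - (sc2 F eps m \<phi> q)\<^sup>2)
     = (F q)\<^sup>2 * Kfac F eps m \<phi> q / 2"
  using rho_denominator_eq_nondeg[of q] nondeg_nonzero[of q] eps_sq
  unfolding Q_fn_def rho_fn_def by (simp add: field_simps)

lemma P_fn_eq:
  "P_fn F eps m I \<phi> x = - eps * sc2 F eps m \<phi> x * Q_fn F eps m I \<phi> x + (F x)\<^sup>2 * cm1 F \<phi> x / 2"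
  unfolding P_fn_def Q_fn_def using eps_sq by (simp add: field_simps)

lemma sc2_P_fn:
  "q \<in> A \<Longrightarrow> sc2 F eps m (P_fn F eps m I \<phi>) q =
     - eps * sc2 F eps m \<phi> q * sc2 F eps m (Q_fn F eps m I \<phi>) q
     - eps * Q_fn F eps m I \<phi> q * sc2 F eps m (sc2 F eps m \<phi>) q
     + (F q)\<^sup>2 / 2 * sc2 F eps m (cm1 F \<phi>) q"
  unfolding P_fn_eq[abs_def] sc2_eq using lowl_upm[of q] by (simp add: algebra_simps) algebra

end

theorem lemma2p8:
  fixes A :: "pt set" and F :: fn and eps :: real and m :: "2 \<Rightarrow> fn"
    and I :: fn and \<phi> :: fn
  assumes "pseudo_finsler A F"
    and "berwald_frame A F eps m"
    and "main_scalar A F m I"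
    and "aniso_conformal A F eps m \<phi>"
  shows "\<forall>p\<in>A.
     sc2 F eps m \<phi> p * P_fn F eps m I \<phi> p
     + sc2 F eps m (P_fn F eps m I \<phi>) p
     + eps * sc2 F eps m \<phi> p * sc2 F eps m (Q_fn F eps m I \<phi>) p
     - (I p * sc2 F eps m \<phi> p + 1) * Q_fn F eps m I \<phi> p
     - (F p)\<^sup>2 * cm2 F eps m \<phi> p = 0"
proof -
  interpret anisotropic_conformal_change A F eps m I \<phi>
    using assms by unfold_locales
  show ?thesis
    using conformal_identity_algebra[OF eps_sq P_fn_eq sc2_P_fn
        Q_times_rho_denominator[unfolded sigma_fn_def Kfac_def]]
    by blast
qed

end
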